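(* Let $\lambda>0$, $X\in\mathbb R^{\mathbf m\times\mathbf n}$, and define on $\mathbb R^{\mathbf m\times\mathbf r}\times\mathbb R^{\mathbf r\times\mathbf n}$ $$f(U,V)=\tfrac12\|X-UV\|_F^2+\tfrac{\lambda}{2}\|I_{\mathbf r}-VV^\top\|_F^2,\quad \varphi_1(U,V)=\tfrac12\|U\|_F^2,\quad \varphi_2(U,V)=\tfrac{6\lambda}{4}\|V\|_F^4+\tfrac12\varepsilon(U)\|V\|_F^2,$$ with $\varepsilon(U)=\max\{\|U^\top U\|,2\lambda\}$ ($\|\cdot\|$ the spectral norm). (1) For any $\bar U\in\mathbb R^{\mathbf m\times\mathbf r}$, $V\in\mathbb R^{\mathbf r\times\mathbf n}$ and $L_1>0$, $$\arg\min_{U\ge0}\Big\{\langle\nabla_Uf(\bar U,V),U\rangle+L_1D_{\varphi_1(\cdot,V)}(U,\bar U)\Big\}=\max\Big(\bar U-\tfrac1{L_1}\big(\bar UVV^\top-XV^\top\big),0\Big).$$ (2) For any $\bar V\in\mathbb R^{\mathbf r\times\mathbf n}$, $U\in\mathbb R^{\mathbf m\times\mathbf r}$ and $L_2>0$, $$\arg\min_{V\ge0}\Big\{\langle\nabla_Vf(U,\bar V),V\rangle+L_2D_{\varphi_2(U,\cdot)}(V,\bar V)\Big\}=\tfrac1\rho\max(G(\bar V),0),$$ where $$G(\bar V)=\nabla_V\varphi_2(U,\bar V)-\tfrac1{L_2}\nabla_Vf(U,\bar V)=(6\lambda\|\bar V\|_F^2+\varepsilon(U))\bar V-\tfrac1{L_2}\big(U^\top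 U\bar V-U^\top X+2\lambda(\bar V\bar V^\top\bar V-\bar V)\big),$$ and $\rho$ is the unique real solution of $\rho^2(\rho-a)=c$ with $a=\varepsilon(U)$ and $c=6\lambda\|\max(G(\bar V),0)\|_F^2$, which is given in closed form by $$\rho=\frac a3+\sqrt[3]{\frac{c+\sqrt\Delta}{2}+\frac{a^3}{27}}+\sqrt[3]{\frac{c-\sqrt\Delta}{2}+\frac{a^3}{27}},\qquad \Delta=c^2+\tfrac4{27}ca^3.$$
   Context: Inner products are Frobenius (trace) inner products; $U\ge0$, $V\ge0$ denote entrywise nonnegativity; $\max(\cdot,0)$ is taken entrywise. For a differentiable convex $\psi$, the Bregman divergence is $D_\psi(x,y)=\psi(x)-\psi(y)-\langle\nabla\psi(y),x-y\rangle$; here $D_{\varphi_1(\cdot,V)}$ is the divergence of $U\mapsto\varphi_1(U,V)$ and $D_{\varphi_2(U,\cdot)}$ that of $V\mapsto\varphi_2(U,V)$. *)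

theory Defs
  imports "HOL-Analysis.Analysis"
begin

text \<open>Matrices are rendered as \<open>real^'c^'r\<close> (rows indexed by 'r, columns by 'c).
  The inner product on this type is the Frobenius inner product and \<open>norm\<close>
  is the Frobenius norm.\<close>

definition grad :: "('a::real_inner \<Rightarrow> real) \<Rightarrow> 'a \<Rightarrow> 'a" where
  "grad \<psi> y = (THE g. (\<psi> has_derivative (\<lambda>h. g \<bullet> h)) (at y))"

definition bregman :: "('a::real_inner \<Rightarrow> real) \<Rightarrow> 'a \<Rightarrow> 'a \<Rightarrow> real" where
  "bregman \<psi> x y = \<psi> x - \<psi> y - grad \<psi> y \<bullet> (x - y)"

definition mat_nonneg :: "real^'c^'r \<Rightarrow> bool" where
  "mat_nonneg A \<longleftrightarrow> (\<forall>i j. 0 \<le> A $ i $ j)"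

definition mat_pos :: "real^'c^'r \<Rightarrow> real^'c^'r" where
  "mat_pos A = (\<chi> i j. max (A $ i $ j) 0)"

definition spec_norm :: "real^'c^'r \<Rightarrow> real" where
  "spec_norm A = onorm (\<lambda>x. A *v x)"

definition argmin_on :: "('a \<Rightarrow> real) \<Rightarrow> 'a set \<Rightarrow> 'a set" where
  "argmin_on F S = {x \<in> S. \<forall>y\<in>S. F x \<le> F y}"

definition nmf_f :: "real \<Rightarrow> real^'n^'m \<Rightarrow> real^'r^'m \<Rightarrow> real^'n^'r \<Rightarrow> real" where
  "nmf_f lam X U V = (1/2) * (norm (X - U ** V))^2
     + (lam/2) * (norm (mat 1 - V ** transpose V))^2"

definition eps :: "real \<Rightarrow> real^'r^'m \<Rightarrow> real" where
  "eps lam U = max (spec_norm (transpose U ** U)) (2*lam)"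

definition phi1 :: "real^'r^'m \<Rightarrow> real^'n^'r \<Rightarrow> real" where
  "phi1 U V = (1/2) * (norm U)^2"

definition phi2 :: "real \<Rightarrow> real^'r^'m \<Rightarrow> real^'n^'r \<Rightarrow> real" where
  "phi2 lam U V = (6*lam/4) * (norm V)^4 + (1/2) * eps lam U * (norm V)^2"

end

theory Submission
  imports Defs
begin

text \<open>Both updates minimise a strongly convex function over the nonnegative orthant.
  In (1) the objective is, up to a constant, \<open>L\<^sub>1/2 \<parallel>U - P\<parallel>\<^sup>2\<close> with
  \<open>P = U\<^sub>b - \<nabla>\<^sub>Uf(U\<^sub>b,V)/L\<^sub>1\<close>, whose minimiser over \<open>U \<ge> 0\<close> is the projection \<open>max(P,0)\<close>.
  In (2) the objective is, up to the factor \<open>L\<^sub>2\<close> and a constant,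
  \<open>3\<lambda>/2 \<parallel>V\<parallel>\<^sup>4 + a/2 \<parallel>V\<parallel>\<^sup>2 - \<langle>G,V\<rangle>\<close>. Its optimality condition
  \<open>(6\<lambda>\<parallel>V\<parallel>\<^sup>2 + a) V = max(G,0)\<close> forces \<open>V = max(G,0)/\<rho>\<close> with
  \<open>\<rho>\<^sup>2(\<rho> - a) = 6\<lambda>\<parallel>max(G,0)\<parallel>\<^sup>2\<close>; this cubic has exactly one positive root, given by
  Cardano's formula. The convexity of \<open>\<parallel>\<cdot>\<parallel>\<^sup>4\<close> and the projection inequality then show
  that the objective grows at least like \<open>a/2 \<parallel>V - V\<^sup>*\<parallel>\<^sup>2\<close> away from this point.\<close>

lemma bilinear_matrix_matrix_mult:
  "bilinear (\<lambda>(A::real^'n^'m) (B::real^'p^'n). A ** B)"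
  unfolding bilinear_def
proof (intro allI conjI linearI)
  fix A A' :: "real^'n^'m" and B B' :: "real^'p^'n" and r :: real
  show "A ** (B + B') = A ** B + A ** B'" by (rule matrix_add_ldistrib)
  show "A ** (r *\<^sub>R B) = r *\<^sub>R (A ** B)" by (simp add: matrix_scalar_ac scalar_matrix_assoc)
  show "(A + A') ** B = A ** B + A' ** B"
    by (vector matrix_matrix_mult_def sum.distrib[symmetric] field_simps)
  show "(r *\<^sub>R A) ** B = r *\<^sub>R (A ** B)" by (simp add: scalar_matrix_assoc)
qed

lemma bounded_bilinear_matrix_matrix_mult:
  "bounded_bilinear (\<lambda>(A::real^'n^'m) (B::real^'p^'n). A ** B)"
  using bilinear_matrix_matrix_mult bilinear_conv_bounded_bilinear by blast

lemmas has_derivative_matrix_matrix_mult =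
  bounded_bilinear.FDERIV[OF bounded_bilinear_matrix_matrix_mult]
lemmas matrix_mult_diff_left = bounded_bilinear.diff_left[OF bounded_bilinear_matrix_matrix_mult]
lemmas matrix_mult_diff_right = bounded_bilinear.diff_right[OF bounded_bilinear_matrix_matrix_mult]

lemma bounded_linear_transpose: "bounded_linear (transpose :: real^'n^'m \<Rightarrow> real^'m^'n)"
  by (rule linear_conv_bounded_linear[THEN iffD1], rule linearI)
     (simp_all add: transpose_def vec_eq_iff)

lemma transpose_diff: "transpose (A - B) = transpose A - transpose (B::real^'n^'m)"
  by (simp add: transpose_def vec_eq_iff)

lemma inner_transpose_transpose: "transpose A \<bullet> transpose B = A \<bullet> (B::real^'n^'m)"
  unfolding inner_vec_def transpose_def by (simp, rule sum.swap)

lemma inner_matrix_mult_right: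
  fixes A :: "real^'p^'m" and B :: "real^'n^'m" and H :: "real^'p^'n"
  shows "A \<bullet> (B ** H) = (transpose B ** A) \<bullet> H"
proof -
  have "A \<bullet> (B ** H) = (\<Sum>i\<in>UNIV. \<Sum>k\<in>UNIV. \<Sum>j\<in>UNIV. B$i$j * A$i$k * H$j$k)"
    by (simp add: inner_vec_def matrix_matrix_mult_def sum_distrib_left mult_ac)
  also have "\<dots> = (\<Sum>i\<in>UNIV. \<Sum>j\<in>UNIV. \<Sum>k\<in>UNIV. B$i$j * A$i$k * H$j$k)"
    by (rule sum.cong[OF refl], rule sum.swap)
  also have "\<dots> = (\<Sum>j\<in>UNIV. \<Sum>i\<in>UNIV. \<Sum>k\<in>UNIV. B$i$j * A$i$k * H$j$k)"
    by (rule sum.swap)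
  also have "\<dots> = (\<Sum>j\<in>UNIV. \<Sum>k\<in>UNIV. \<Sum>i\<in>UNIV. B$i$j * A$i$k * H$j$k)"
    by (rule sum.cong[OF refl], rule sum.swap)
  also have "\<dots> = (transpose B ** A) \<bullet> H"
    by (simp add: inner_vec_def matrix_matrix_mult_def transpose_def sum_distrib_right)
  finally show ?thesis .
qed

lemma inner_matrix_mult_left:
  fixes A :: "real^'p^'m" and B :: "real^'p^'n" and H :: "real^'n^'m"
  shows "A \<bullet> (H ** B) = (A ** transpose B) \<bullet> H"
proof -
  have "A \<bullet> (H ** B) = transpose A \<bullet> transpose (H ** B)"
    by (rule inner_transpose_transpose[symmetric])
  also have "\<dots> = (B ** transpose A) \<bullet> transpose H"
    by (simp only: matrix_transpose_mul inner_matrix_mult_right transpose_transpose)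
  also have "\<dots> = transpose (B ** transpose A) \<bullet> H"
    by (metis inner_transpose_transpose transpose_transpose)
  finally show ?thesis by (simp only: matrix_transpose_mul transpose_transpose)
qed

lemma has_derivative_power2_norm:
  assumes "(F has_derivative F') (at y)"
  shows "((\<lambda>x. (norm (F x))\<^sup>2) has_derivative (\<lambda>h. 2 * (F y \<bullet> F' h))) (at y)"
  unfolding power2_norm_eq_inner
  by (rule has_derivative_eq_rhs[OF has_derivative_inner[OF assms assms]])
     (simp add: fun_eq_iff inner_commute)

lemma grad_eqI:
  fixes g :: "'a::real_inner"
  assumes "(\<psi> has_derivative (\<lambda>h. g \<bullet> h)) (at y)"
  shows "grad \<psi> y = g"
  unfolding grad_def
proof (rule the_equality)
  fix g' assume "(\<psi> has_derivative (\<lambda>h. g' \<bullet> h)) (at y)"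
  then have "(\<lambda>h. g' \<bullet> h) = (\<lambda>h. g \<bullet> h)" using assms has_derivative_unique by blast
  then have "(g' - g) \<bullet> (g' - g) = 0" by (metis inner_diff_left right_minus_eq)
  then show "g' = g" by simp
qed (fact assms)

lemma grad_phi1: "grad (\<lambda>W. phi1 W V) U = U"
proof (rule grad_eqI)
  have "((\<lambda>W. (1/2) * (norm W)\<^sup>2) has_derivative (\<lambda>h. (1/2) * (2 * (U \<bullet> h)))) (at U)"
    by (intro has_derivative_mult_right has_derivative_power2_norm has_derivative_ident)
  then show "((\<lambda>W. phi1 W V) has_derivative (\<lambda>h. U \<bullet> h)) (at U)"
    unfolding phi1_def by (auto elim!: has_derivative_eq_rhs)
qed

lemma grad_phi2:
  fixes V :: "real^'n^'r"
  shows "grad (\<lambda>W. phi2 lam U W) V = (6*lam * (norm V)\<^sup>2 + eps lam U) *\<^sub>R V"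
proof (rule grad_eqI)
  have "((\<lambda>W. (6*lam/4) * ((norm W)\<^sup>2)\<^sup>2 + (1/2) * eps lam U * (norm W)\<^sup>2) has_derivative
     (\<lambda>h. (6*lam/4) * (of_nat 2 * (2 * (V \<bullet> h)) * ((norm V)\<^sup>2)^(2-1))
          + (1/2) * eps lam U * (2 * (V \<bullet> h)))) (at V)"
    by (intro has_derivative_add has_derivative_mult_right has_derivative_power
        has_derivative_power2_norm has_derivative_ident)
  moreover have "(norm W)^4 = ((norm W)\<^sup>2)\<^sup>2" for W :: "real^'n^'r"
    by simp
  ultimately show "((\<lambda>W. phi2 lam U W) has_derivative
      (\<lambda>h. ((6*lam * (norm V)\<^sup>2 + eps lam U) *\<^sub>R V) \<bullet> h)) (at V)"
    unfolding phi2_def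
    by (auto elim!: has_derivative_eq_rhs simp: fun_eq_iff algebra_simps power2_eq_square)
qed

lemma grad_nmf_f_U:
  "grad (\<lambda>W. nmf_f lam X W V) U = U ** V ** transpose V - X ** transpose V"
proof (rule grad_eqI)
  have "((\<lambda>W. (1/2) * (norm (X - W ** V))\<^sup>2 + (lam/2) * (norm (mat 1 - V ** transpose V))\<^sup>2)
      has_derivative (\<lambda>h. (1/2) * (2 * ((X - U ** V) \<bullet> (0 - (U ** 0 + h ** V)))) + 0)) (at U)"
    by (intro has_derivative_add has_derivative_mult_right has_derivative_power2_norm
        has_derivative_diff has_derivative_const has_derivative_matrix_matrix_mult
        has_derivative_ident)
  moreover have "(X - U ** V) \<bullet> (0 - (U ** 0 + h ** V))
      = (U ** V ** transpose V - X ** transpose V) \<bullet> h" for h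
    by (simp add: inner_matrix_mult_left inner_diff_left matrix_mult_diff_left)
  ultimately show "((\<lambda>W. nmf_f lam X W V) has_derivative
      (\<lambda>h. (U ** V ** transpose V - X ** transpose V) \<bullet> h)) (at U)"
    unfolding nmf_f_def by (auto elim!: has_derivative_eq_rhs)
qed

lemma grad_nmf_f_V:
  fixes U :: "real^'r^'m" and V :: "real^'n^'r"
  shows "grad (\<lambda>W. nmf_f lam X U W) V
    = transpose U ** U ** V - transpose U ** X + (2*lam) *\<^sub>R (V ** transpose V ** V - V)"
proof (rule grad_eqI)
  define N where "N = V ** transpose V - mat 1"
  have "((\<lambda>W. (1/2) * (norm (X - U ** W))\<^sup>2 + (lam/2) * (norm (mat 1 - W ** transpose W))\<^sup>2)
      has_derivative (\<lambda>h. (1/2) * (2 * ((X - U ** V) \<bullet> (0 - (U ** h + 0 ** V))))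
        + (lam/2) * (2 * ((mat 1 - V ** transpose V) \<bullet> (0 - (V ** transpose h + h ** transpose V))))))
      (at V)"
    by (intro has_derivative_add has_derivative_mult_right has_derivative_power2_norm
        has_derivative_diff has_derivative_const has_derivative_matrix_matrix_mult
        has_derivative_ident bounded_linear_imp_has_derivative[OF bounded_linear_transpose])
  moreover have "(X - U ** V) \<bullet> (0 - (U ** h + 0 ** V))
      = (transpose U ** U ** V - transpose U ** X) \<bullet> h" for h
    by (simp add: inner_matrix_mult_right inner_diff_left matrix_mult_diff_right matrix_mul_assoc)
  moreover have "(mat 1 - V ** transpose V) \<bullet> (0 - (V ** transpose h + h ** transpose V))
      = 2 * ((V ** transpose V ** V - V) \<bullet> h)" for h
  proof -
    have "N \<bullet> (V ** transpose h) = transpose N \<bullet> transpose (V ** transpose h)"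
      by (rule inner_transpose_transpose[symmetric])
    also have "\<dots> = N \<bullet> (h ** transpose V)"
      by (simp add: N_def matrix_transpose_mul transpose_diff)
    finally have "(mat 1 - V ** transpose V) \<bullet> (0 - (V ** transpose h + h ** transpose V))
        = 2 * (N \<bullet> (h ** transpose V))"
      by (simp add: N_def inner_add_right inner_diff_left algebra_simps)
    then show ?thesis
      by (simp add: inner_matrix_mult_left N_def matrix_mult_diff_left)
  qed
  ultimately show "((\<lambda>W. nmf_f lam X U W) has_derivative (\<lambda>h.
      (transpose U ** U ** V - transpose U ** X + (2*lam) *\<^sub>R (V ** transpose V ** V - V)) \<bullet> h))
      (at V)"
    unfolding nmf_f_def by (auto elim!: has_derivative_eq_rhs simp: inner_add_left)
qed

lemma argmin_on_eq_singletonI: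
  fixes F :: "'a::real_normed_vector \<Rightarrow> real"
  assumes "x \<in> S" and "k > 0"
    and growth: "\<And>y. y \<in> S \<Longrightarrow> F x + k * (norm (y - x))\<^sup>2 \<le> F y"
  shows "argmin_on F S = {x}"
proof -
  have "F x \<le> F y" if "y \<in> S" for y
  proof -
    have "0 \<le> k * (norm (y - x))\<^sup>2" using \<open>k > 0\<close> by simp
    then show ?thesis using growth[OF that] by linarith
  qed
  moreover have "y = x" if "y \<in> S" "F y \<le> F x" for y
  proof -
    have "k * (norm (y - x))\<^sup>2 \<le> 0" using growth[OF that(1)] that(2) by simp
    then show ?thesis using \<open>k > 0\<close> by (simp add: mult_le_0_iff)
  qed
  ultimately show ?thesis
    using \<open>x \<in> S\<close> unfolding argmin_on_def by fastforce
qed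

lemma argmin_on_affine_cong:
  assumes "L > 0" and "\<And>x. x \<in> S \<Longrightarrow> F x = L * H x + K"
  shows "argmin_on F S = argmin_on H S"
  using assms unfolding argmin_on_def by auto

lemma mat_nonneg_mat_pos: "mat_nonneg (mat_pos A)"
  unfolding mat_pos_def mat_nonneg_def by simp

lemma inner_mat_pos_diff_nonneg:
  assumes "mat_nonneg U"
  shows "0 \<le> (mat_pos P - P) \<bullet> U"
  using assms unfolding inner_vec_def mat_pos_def mat_nonneg_def
  by (auto intro!: sum_nonneg simp: max_def)

lemma inner_mat_pos_diff_mat_pos: "(mat_pos P - P) \<bullet> mat_pos P = 0"
  unfolding inner_vec_def mat_pos_def by (auto intro!: sum.neutral simp: max_def)

lemma argmin_nonneg_dist_power2:
  fixes P :: "real^'c^'r"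
  shows "argmin_on (\<lambda>U. (norm (U - P))\<^sup>2) {U. mat_nonneg U} = {mat_pos P}"
proof (rule argmin_on_eq_singletonI)
  fix U :: "real^'c^'r" assume "U \<in> {U. mat_nonneg U}"
  then have "0 \<le> (mat_pos P - P) \<bullet> (U - mat_pos P)"
    using inner_mat_pos_diff_nonneg[of U P] inner_mat_pos_diff_mat_pos[of P]
    by (simp add: inner_diff_right)
  moreover have "(norm (U - P))\<^sup>2 = (norm (mat_pos P - P))\<^sup>2 + (norm (U - mat_pos P))\<^sup>2
      + 2 * ((mat_pos P - P) \<bullet> (U - mat_pos P))"
    unfolding power2_norm_eq_inner by (simp add: inner_diff_left inner_diff_right inner_commute)
  ultimately show "(norm (mat_pos P - P))\<^sup>2 + 1 * (norm (U - mat_pos P))\<^sup>2 \<le> (norm (U - P))\<^sup>2"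
    by simp
qed (simp_all add: mat_nonneg_mat_pos)

lemma power4_norm_ge_tangent:
  fixes V W :: "'a::real_inner"
  shows "(norm W)^4 + 4 * (norm W)\<^sup>2 * (W \<bullet> (V - W)) \<le> (norm V)^4"
proof -
  define x w p where "x = V \<bullet> V" and "w = W \<bullet> W" and "p = W \<bullet> V"
  have "2 * p \<le> x + w"
    using inner_ge_zero[of "V - W"] unfolding x_def w_def p_def
    by (simp add: inner_diff_left inner_diff_right inner_commute)
  then have "4 * w * p \<le> 2 * w * (x + w)"
    using mult_left_mono[of "2 * p" "x + w" w] by (simp add: w_def algebra_simps)
  then have "w\<^sup>2 + 4 * w * (p - w) \<le> x\<^sup>2"
    using zero_le_power2[of "x - w"] by (simp add: power2_eq_square algebra_simps)
  moreover have "(norm z)^4 = (z \<bullet> z)\<^sup>2" for z :: 'a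
    by (simp flip: power2_norm_eq_inner power_mult)
  ultimately show ?thesis
    by (simp add: x_def w_def p_def power2_norm_eq_inner inner_diff_right)
qed

lemma argmin_nonneg_quartic:
  fixes G :: "real^'c^'r"
  assumes lam: "0 \<le> lam" and a: "0 < a"
    and \<rho>: "0 < \<rho>" "\<rho>\<^sup>2 * (\<rho> - a) = 6*lam * (norm (mat_pos G))\<^sup>2"
  shows "argmin_on (\<lambda>V. (6*lam/4) * (norm V)^4 + (a/2) * (norm V)\<^sup>2 - G \<bullet> V) {V. mat_nonneg V}
    = {(1/\<rho>) *\<^sub>R mat_pos G}"
proof (rule argmin_on_eq_singletonI)
  define W where "W = (1/\<rho>) *\<^sub>R mat_pos G"
  show "W \<in> {V. mat_nonneg V}"
    using \<rho>(1) unfolding W_def mat_nonneg_def mat_pos_def by simp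
  show "a/2 > 0" using a by simp
  have "\<rho>^3 = 6*lam * (norm (mat_pos G))\<^sup>2 + a * \<rho>\<^sup>2"
    using \<rho>(2) by (simp add: power2_eq_square power3_eq_cube algebra_simps)
  then have "6*lam * (norm W)\<^sup>2 + a = \<rho>"
    using \<rho>(1) by (simp add: W_def power_divide field_simps power2_eq_square power3_eq_cube)
  then have stationary: "(6*lam * (norm W)\<^sup>2 + a) *\<^sub>R W = mat_pos G"
    using \<rho>(1) by (simp add: W_def)
  fix V :: "real^'c^'r" assume "V \<in> {V. mat_nonneg V}"
  then have "G \<bullet> (V - W) \<le> mat_pos G \<bullet> (V - W)"
    using inner_mat_pos_diff_nonneg[of V G] inner_mat_pos_diff_mat_pos[of G]
    by (simp add: W_def inner_diff_left inner_diff_right)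
  moreover have "(6*lam/4) * (norm W)^4 + 6*lam * (norm W)\<^sup>2 * (W \<bullet> (V - W))
      \<le> (6*lam/4) * (norm V)^4"
    using mult_left_mono[OF power4_norm_ge_tangent[of W V], of "6*lam/4"] lam
    by (simp add: algebra_simps)
  moreover have "(a/2) * (norm V)\<^sup>2 = (a/2) * (norm W)\<^sup>2 + a * (W \<bullet> (V - W)) + (a/2) * (norm (V - W))\<^sup>2"
    unfolding power2_norm_eq_inner by (simp add: inner_diff_left inner_diff_right inner_commute algebra_simps)
  moreover have "6*lam * (norm W)\<^sup>2 * (W \<bullet> (V - W)) + a * (W \<bullet> (V - W)) = mat_pos G \<bullet> (V - W)"
    using arg_cong[OF stationary, of "\<lambda>M. M \<bullet> (V - W)"] by (simp add: algebra_simps)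
  moreover have "G \<bullet> V = G \<bullet> W + G \<bullet> (V - W)"
    by (simp add: inner_diff_right)
  ultimately show "(6*lam/4) * (norm W)^4 + (a/2) * (norm W)\<^sup>2 - G \<bullet> W + a/2 * (norm (V - W))\<^sup>2
      \<le> (6*lam/4) * (norm V)^4 + (a/2) * (norm V)\<^sup>2 - G \<bullet> V"
    by linarith
qed

lemma cardano_positive_root:
  fixes a c :: real
  assumes a: "a > 0" and c: "c \<ge> 0"
  defines "\<Delta> \<equiv> c\<^sup>2 + (4/27) * c * a^3"
  defines "\<rho> \<equiv> a/3 + root 3 ((c + sqrt \<Delta>)/2 + a^3/27) + root 3 ((c - sqrt \<Delta>)/2 + a^3/27)"
  shows "\<rho> > 0 \<and> \<rho>\<^sup>2 * (\<rho> - a) = c"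
proof -
  define u w where "u = root 3 ((c + sqrt \<Delta>)/2 + a^3/27)" and "w = root 3 ((c - sqrt \<Delta>)/2 + a^3/27)"
  have \<Delta>: "\<Delta> \<ge> 0" "(sqrt \<Delta>)\<^sup>2 = \<Delta>" unfolding \<Delta>_def using a c by simp_all
  have u3: "u^3 = (c + sqrt \<Delta>)/2 + a^3/27" and w3: "w^3 = (c - sqrt \<Delta>)/2 + a^3/27"
    unfolding u_def w_def by (simp_all add: odd_real_root_pow)
  \<comment> \<open>Vieta: \<open>u\<^sup>3 w\<^sup>3 = (a\<^sup>2/9)\<^sup>3\<close>, so \<open>y = u + w\<close> solves the depressed cubic
      \<open>y\<^sup>3 = (a\<^sup>2/3) y + c + 2a\<^sup>3/27\<close> obtained by substituting \<open>\<rho> = a/3 + y\<close>\<close>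
  have "((c + sqrt \<Delta>)/2 + a^3/27) * ((c - sqrt \<Delta>)/2 + a^3/27) = (c/2 + a^3/27)\<^sup>2 - (sqrt \<Delta>)\<^sup>2/4"
    by (simp add: field_simps power2_eq_square)
  also have "\<dots> = (a\<^sup>2/9)^3"
    unfolding \<Delta>(2) unfolding \<Delta>_def by (simp add: field_simps power2_eq_square power3_eq_cube)
  finally have uw: "u * w = a\<^sup>2/9"
    unfolding u_def w_def real_root_mult[symmetric] by (simp add: odd_real_root_power_cancel)
  have u: "u > 0" unfolding u_def using a c \<Delta>(1) by (simp add: add_nonneg_pos)
  moreover have "u * w > 0" unfolding uw using a by simp
  ultimately have w: "w > 0" by (simp add: zero_less_mult_iff)
  have "(u + w)^3 = u^3 + w^3 + 3 * (u * w) * (u + w)" by (simp add: power3_eq_cube algebra_simps)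
  also have "\<dots> = c + 2 * a^3/27 + (a\<^sup>2/3) * (u + w)" unfolding u3 w3 uw by (simp add: field_simps)
  finally have "(a/3 + (u + w))\<^sup>2 * ((a/3 + (u + w)) - a) = c"
    by (simp add: power2_eq_square power3_eq_cube field_simps)
  moreover have "\<rho> = a/3 + (u + w)" unfolding \<rho>_def u_def w_def by simp
  ultimately show ?thesis using u w a by simp
qed

lemma cubic_positive_root_unique:
  fixes a c t r :: real
  assumes "c \<ge> 0" and t: "t > 0" "t\<^sup>2 * (t - a) = c" and r: "r > 0" "r\<^sup>2 * (r - a) = c"
  shows "t = r"
proof -
  \<comment> \<open>any positive root lies in \<open>[a, \<infinity>)\<close>, where \<open>x \<mapsto> x\<^sup>2(x - a)\<close> is strictly increasing\<close>
  have root_ge: "a \<le> x" if "x > 0" "x\<^sup>2 * (x - a) = c" for x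
  proof (rule ccontr)
    assume "\<not> a \<le> x"
    then have "x\<^sup>2 * (x - a) < 0" using that(1) by (simp add: mult_pos_neg)
    then show False using that(2) \<open>c \<ge> 0\<close> by simp
  qed
  have "t \<ge> a" "r \<ge> a" using root_ge t r by auto
  then have "t * (t - a) \<ge> 0" "r * (r - a) \<ge> 0" "t * r > 0"
    using t(1) r(1) by simp_all
  then have "t * (t - a) + r * (r - a) + t * r > 0" by linarith
  moreover have "(t - r) * (t * (t - a) + r * (r - a) + t * r) = 0"
    using t(2) r(2) by (simp add: power2_eq_square algebra_simps)
  ultimately show ?thesis by simp
qed

lemma nmf_U_update:
  fixes X :: "real^'n^'m" and Ub :: "real^'r^'m" and V :: "real^'n^'r"
  assumes L: "L > 0"
  shows "argmin_on (\<lambda>U. grad (\<lambda>W. nmf_f lam X W V) Ub \<bullet> U + L * bregman (\<lambda>W. phi1 W V) U Ub)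
      {U. mat_nonneg U}
    = {mat_pos (Ub - (1/L) *\<^sub>R (Ub ** V ** transpose V - X ** transpose V))}"
    (is "argmin_on ?F ?S = _")
proof -
  define P where "P = Ub - (1/L) *\<^sub>R (Ub ** V ** transpose V - X ** transpose V)"
  have grad_f: "grad (\<lambda>W. nmf_f lam X W V) Ub = L *\<^sub>R (Ub - P)"
    using L by (simp add: grad_nmf_f_U P_def)
  have objective: "?F U = (L/2) * (norm (U - P))\<^sup>2 + (L/2) * ((norm Ub)\<^sup>2 - (norm P)\<^sup>2)" for U
    unfolding bregman_def grad_phi1 grad_f unfolding phi1_def power2_norm_eq_inner
    by (simp add: inner_diff_left inner_diff_right inner_commute algebra_simps)
  have "argmin_on ?F ?S = argmin_on (\<lambda>U. (norm (U - P))\<^sup>2) ?S"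
    using L objective
    by (intro argmin_on_affine_cong[where L = "L/2" and K = "(L/2) * ((norm Ub)\<^sup>2 - (norm P)\<^sup>2)"]) simp_all
  then show ?thesis
    unfolding argmin_nonneg_dist_power2 P_def .
qed

lemma nmf_V_update:
  fixes X :: "real^'n^'m" and U :: "real^'r^'m" and Vb :: "real^'n^'r"
  assumes lam: "lam > 0" and L: "L > 0"
  defines "G \<equiv> grad (\<lambda>W. phi2 lam U W) Vb - (1/L) *\<^sub>R grad (\<lambda>W. nmf_f lam X U W) Vb"
  defines "a \<equiv> eps lam U"
  defines "c \<equiv> 6*lam * (norm (mat_pos G))\<^sup>2"
  defines "\<Delta> \<equiv> c\<^sup>2 + (4/27) * c * a^3"
  defines "\<rho> \<equiv> a/3 + root 3 ((c + sqrt \<Delta>)/2 + a^3/27) + root 3 ((c - sqrt \<Delta>)/2 + a^3/27)"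
  shows "G = (6*lam * (norm Vb)\<^sup>2 + a) *\<^sub>R Vb
              - (1/L) *\<^sub>R (transpose U ** U ** Vb - transpose U ** X
                            + (2*lam) *\<^sub>R (Vb ** transpose Vb ** Vb - Vb))
    \<and> \<rho> > 0 \<and> \<rho>\<^sup>2 * (\<rho> - a) = c
    \<and> (\<forall>t::real. t > 0 \<and> t\<^sup>2 * (t - a) = c \<longrightarrow> t = \<rho>)
    \<and> argmin_on
        (\<lambda>V. grad (\<lambda>W. nmf_f lam X U W) Vb \<bullet> V + L * bregman (\<lambda>W. phi2 lam U W) V Vb)
        {V. mat_nonneg V}
      = {(1/\<rho>) *\<^sub>R mat_pos G}"
    (is "_ \<and> _ \<and> _ \<and> _ \<and> argmin_on ?F ?S = _")
proof (intro conjI)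
  show "G = (6*lam * (norm Vb)\<^sup>2 + a) *\<^sub>R Vb
              - (1/L) *\<^sub>R (transpose U ** U ** Vb - transpose U ** X
                            + (2*lam) *\<^sub>R (Vb ** transpose Vb ** Vb - Vb))"
    unfolding G_def a_def grad_phi2 grad_nmf_f_V ..
  have a: "a > 0" unfolding a_def eps_def using lam by simp
  have c: "c \<ge> 0" unfolding c_def using lam by simp
  show \<rho>: "\<rho> > 0" "\<rho>\<^sup>2 * (\<rho> - a) = c"
    using cardano_positive_root[OF a c] unfolding \<rho>_def \<Delta>_def by simp_all
  show "\<forall>t. t > 0 \<and> t\<^sup>2 * (t - a) = c \<longrightarrow> t = \<rho>"
    using cubic_positive_root_unique[OF c _ _ \<rho>] by blast
  have "?F V = L * ((6*lam/4) * (norm V)^4 + (a/2) * (norm V)\<^sup>2 - G \<bullet> V)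
        + L * (grad (\<lambda>W. phi2 lam U W) Vb \<bullet> Vb - phi2 lam U Vb)" for V
  proof -
    have phi2_eq: "phi2 lam U W = (6*lam/4) * (norm W)^4 + (a/2) * (norm W)\<^sup>2" for W
      unfolding phi2_def a_def by simp
    \<comment> \<open>instantiated, so that \<open>phi2\<close> under \<open>grad\<close> is not rewritten\<close>
    show ?thesis
      using L unfolding bregman_def G_def
      by (simp add: phi2_eq[of V] phi2_eq[of Vb] inner_diff_left inner_diff_right algebra_simps)
  qed
  then have "argmin_on ?F ?S
      = argmin_on (\<lambda>V. (6*lam/4) * (norm V)^4 + (a/2) * (norm V)\<^sup>2 - G \<bullet> V) ?S"
    using L by (intro argmin_on_affine_cong) auto
  then show "argmin_on ?F ?S = {(1/\<rho>) *\<^sub>R mat_pos G}"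
    using argmin_nonneg_quartic[OF _ a \<rho>[unfolded c_def]] lam by simp
qed

theorem proposition5p2:
  fixes lam :: real and X :: "real^'n^'m"
  assumes lam: "lam > 0"
  shows
   "(\<forall>(Ub :: real^'r^'m) (V :: real^'n^'r) L1. L1 > 0 \<longrightarrow>
      argmin_on
        (\<lambda>U. grad (\<lambda>W. nmf_f lam X W V) Ub \<bullet> U + L1 * bregman (\<lambda>W. phi1 W V) U Ub)
        {U. mat_nonneg U}
      = {mat_pos (Ub - (1/L1) *\<^sub>R (Ub ** V ** transpose V - X ** transpose V))})
  \<and>
   (\<forall>(Vb :: real^'n^'r) (U :: real^'r^'m) L2. L2 > 0 \<longrightarrow>
      (let G = grad (\<lambda>W. phi2 lam U W) Vb - (1/L2) *\<^sub>R grad (\<lambda>W. nmf_f lam X U W) Vb;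
           a = eps lam U;
           c = 6*lam * (norm (mat_pos G))^2;
           \<Delta> = c^2 + (4/27) * c * a^3;
           \<rho> = a/3 + root 3 ((c + sqrt \<Delta>)/2 + a^3/27) + root 3 ((c - sqrt \<Delta>)/2 + a^3/27)
       in G = (6*lam * (norm Vb)^2 + a) *\<^sub>R Vb
                - (1/L2) *\<^sub>R (transpose U ** U ** Vb - transpose U ** X
                              + (2*lam) *\<^sub>R (Vb ** transpose Vb ** Vb - Vb))
        \<and> \<rho> > 0 \<and> \<rho>^2 * (\<rho> - a) = c
        \<and> (\<forall>t::real. t > 0 \<and> t^2 * (t - a) = c \<longrightarrow> t = \<rho>)
        \<and> argmin_on
            (\<lambda>V. grad (\<lambda>W. nmf_f lam X U W) Vb \<bullet> V + L2 * bregman (\<lambda>W. phi2 lam U W) V Vb)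
            {V. mat_nonneg V}
          = {(1/\<rho>) *\<^sub>R mat_pos G}))"
  unfolding Let_def using nmf_U_update nmf_V_update[OF lam] by blast

end
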